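(* Let $\mathcal H=\mathcal H_-\oplus\mathcal H_+$, $\Omega$, $\mathbb U$, $A,B,C,D$, $\tau$ and $T$ be as in the context, and assume that $\mathcal H=\mathbb U(T)\oplus\mathcal H_-$. Then $C\tau+D:\mathcal H_+\to\mathcal H_+$ is a bounded linear isomorphism, and the propagator satisfies $\Delta^{\alpha\beta}=-\big[(C\tau+D)^{-1}C\big]^{\alpha\beta}$ (matrix coefficients with respect to the bases $\{e^\alpha\}$, $\{f_\alpha\}$). In particular, if $C$ is of trace class then $\Delta$, viewed as a linear operator $T'\to T$, is of trace class.
   Context: $\mathcal H$ is a separable complex Hilbert space with orthonormal basis $\{e^\alpha,f_\alpha:\alpha\in\mathbb Z_{\ge0}\}$ and symplectic form $\Omega$ with $\Omega(e^\alpha,f_\beta)=\delta_{\alpha\beta}$, $\Omega(e^\alpha,e^\beta)=\Omega(f_\alpha,f_\beta)=0$; $\mathcal H_-$ is the closed span of the $e^\alpha$ and $\mathcal H_+$ that of the $f_\alpha$; $q^\alpha$ denote the linear coordinates on $\mathcal H_+$ dual to $f_\alpha$. $\mathbb U$ is a bounded symplectic automorphism of $\mathcal H$ written in block form $\mathbb U=\begin{pmatrix}A&B\\C&D\end{pmatrix}$ with respect to $\mathcal H=\mathcal H_-\oplus\mathcal H_+$, i.e. $A:\mathcal H_-\to\mathcal H_-$, $B:\mathcal H_+\to\mathcal H_-$, $C:\mathcal H_-\to\mathcal H_+$, $D:\mathcal H_+\to\mathcal H_+$, with matrix entries $Ce^\beta=\sum_\alpha C^{\alpha\beta}f_\alpha$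 etc. $\tau:\mathcal H_+\to\mathcal H_-$ is a bounded operator that is symmetric ($\tau_{\alpha\beta}=\tau_{\beta\alpha}$ where $\tau f_\beta=\sum_\alpha\tau_{\alpha\beta}e^\alpha$), e.g. the Hessian $\tau_{\alpha\beta}=\partial^2C^{(0)}/\partial q^\alpha\partial q^\beta$ of a holomorphic function whose differential graph is a Lagrangian submanifold; $T=\{\tau\mathbf q+\mathbf q:\mathbf q\in\mathcal H_+\}$ is the corresponding Lagrangian subspace (the tangent space of that graph), so $\mathcal H=T\oplus\mathcal H_-$ and the coordinates $q^\alpha$ restrict to coordinates on $T$, whose differentials $dq^\alpha$ form the dual basis of $T'$. Under the assumption $\mathcal H=\mathbb U(T)\oplus\mathcal H_-$ one also has $\mathcal H=T\oplus\mathbb U^{-1}\mathcal H_-$, and $v\mapsto\Omega(v,\cdot)|_T$ defines isomorphisms $\sharp_1:\mathcal H_-\to T'$ and $\sharp_2:\mathbb U^{-1}\mathcal H_-\to T'$. The propagator is the bilinear form on $T'$ given by $\Delta(v_1,v_2)=\Omega(\sharp_1^{-1}v_1,\sharp_2^{-1}v_2)$, and $\Delta^{\alpha\beta}:=\Delta(dq^\alpha,dq^\beta)$. *)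

theory Defs
  imports Complex_Main
begin

text \<open>Model: H_- and H_+ are each identified with l2(nat) via the orthonormal bases
  e^alpha resp. f_alpha; a vector of H is a pair (x, y) where x are the e-coefficients
  (H_- part) and y the f-coefficients (H_+ part).  Operators are functions on
  nat => complex, of which only the values on l2 matter.\<close>

type_synonym seq = "nat \<Rightarrow> complex"
type_synonym op = "seq \<Rightarrow> seq"
type_synonym hvec = "seq \<times> seq"

definition l2 :: "seq set" where
  "l2 = {x. summable (\<lambda>n. (cmod (x n))^2)}"

definition l2_norm :: "seq \<Rightarrow> real" where
  "l2_norm x = sqrt (\<Sum>n. (cmod (x n))^2)"

definition l2_inner :: "seq \<Rightarrow> seq \<Rightarrow> complex" where
  "l2_inner x y = (\<Sum>n. x n * cnj (y n))"

definition bounded_op :: "op \<Rightarrow> bool" where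
  "bounded_op L \<longleftrightarrow>
     (\<forall>x\<in>l2. L x \<in> l2) \<and>
     (\<forall>x\<in>l2. \<forall>y\<in>l2. \<forall>a b. L (\<lambda>n. a * x n + b * y n) = (\<lambda>n. a * L x n + b * L y n)) \<and>
     (\<exists>K. \<forall>x\<in>l2. l2_norm (L x) \<le> K * l2_norm x)"

definition basis_vec :: "nat \<Rightarrow> seq" where
  "basis_vec \<beta> = (\<lambda>n. if n = \<beta> then 1 else 0)"

definition coeff :: "op \<Rightarrow> nat \<Rightarrow> nat \<Rightarrow> complex" where
  "coeff L \<alpha> \<beta> = L (basis_vec \<beta>) \<alpha>"

definition HH :: "hvec set" where
  "HH = l2 \<times> l2"

text \<open>Symplectic form: Omega(e^a, f_b) = delta_ab, Omega(e,e) = Omega(f,f) = 0 (complex bilinear).\<close>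
definition omega :: "hvec \<Rightarrow> hvec \<Rightarrow> complex" where
  "omega v w = (\<Sum>a. fst v a * snd w a) - (\<Sum>a. snd v a * fst w a)"

definition Hminus :: "hvec set" where
  "Hminus = {v. fst v \<in> l2 \<and> snd v = (\<lambda>_. 0)}"

definition vadd :: "hvec \<Rightarrow> hvec \<Rightarrow> hvec" where
  "vadd v w = (\<lambda>n. fst v n + fst w n, \<lambda>n. snd v n + snd w n)"

definition hzero :: hvec where
  "hzero = (\<lambda>_. 0, \<lambda>_. 0)"

definition blockop :: "op \<Rightarrow> op \<Rightarrow> op \<Rightarrow> op \<Rightarrow> hvec \<Rightarrow> hvec" where
  "blockop A B C D = (\<lambda>v. (\<lambda>n. A (fst v) n + B (snd v) n, \<lambda>n. C (fst v) n + D (snd v) n))"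

text \<open>Symplectic automorphism (linearity/boundedness come from the blocks).\<close>
definition symplectic_aut :: "(hvec \<Rightarrow> hvec) \<Rightarrow> bool" where
  "symplectic_aut U \<longleftrightarrow> bij_betw U HH HH \<and> (\<forall>v\<in>HH. \<forall>w\<in>HH. omega (U v) (U w) = omega v w)"

definition lagr_T :: "op \<Rightarrow> hvec set" where
  "lagr_T \<tau> = {(\<tau> q, q) | q. q \<in> l2}"

definition direct_sum_H :: "hvec set \<Rightarrow> hvec set \<Rightarrow> bool" where
  "direct_sum_H X Y \<longleftrightarrow> (\<forall>v\<in>HH. \<exists>x\<in>X. \<exists>y\<in>Y. v = vadd x y) \<and> X \<inter> Y = {hzero}"

definition dq :: "nat \<Rightarrow> hvec \<Rightarrow> complex" where
  "dq \<alpha> t = snd t \<alpha>"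

text \<open>Inverses of sharp_1 : H_- -> T' and sharp_2 : U^{-1} H_- -> T', v |-> Omega(v, .)|_T.\<close>
definition sharp1_inv :: "op \<Rightarrow> (hvec \<Rightarrow> complex) \<Rightarrow> hvec" where
  "sharp1_inv \<tau> \<phi> = (THE v. v \<in> Hminus \<and> (\<forall>t\<in>lagr_T \<tau>. omega v t = \<phi> t))"

definition sharp2_inv :: "(hvec \<Rightarrow> hvec) \<Rightarrow> op \<Rightarrow> (hvec \<Rightarrow> complex) \<Rightarrow> hvec" where
  "sharp2_inv U \<tau> \<phi> = (THE v. v \<in> HH \<and> U v \<in> Hminus \<and> (\<forall>t\<in>lagr_T \<tau>. omega v t = \<phi> t))"

definition propagator :: "(hvec \<Rightarrow> hvec) \<Rightarrow> op \<Rightarrow> nat \<Rightarrow> nat \<Rightarrow> complex" where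
  "propagator U \<tau> \<alpha> \<beta> = omega (sharp1_inv \<tau> (dq \<alpha>)) (sharp2_inv U \<tau> (dq \<beta>))"

definition CtauD :: "op \<Rightarrow> op \<Rightarrow> op \<Rightarrow> op" where
  "CtauD C D \<tau> = (\<lambda>q n. C (\<tau> q) n + D q n)"

text \<open>Trace class (= nuclear) operators on l2: L v = sum_n <v, x_n> y_n with
  sum_n |x_n| |y_n| < infinity.\<close>
definition trace_class :: "op \<Rightarrow> bool" where
  "trace_class L \<longleftrightarrow> (\<exists>x y. (\<forall>n. x n \<in> l2 \<and> y n \<in> l2) \<and>
      summable (\<lambda>n. l2_norm (x n) * l2_norm (y n)) \<and>
      (\<forall>v\<in>l2. L v = (\<lambda>\<alpha>. \<Sum>n. l2_inner v (x n) * y n \<alpha>)))"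

end

theory Submission
  imports Defs "HOL-Analysis.Urysohn"
begin

text \<open>Write G = C tau + D.  In block form U (tau q, q) = (A tau q + B q, G q), so
  U(T) \<inter> H_- = 0 and injectivity of U make G injective, while H = U(T) + H_- makes it
  surjective; its inverse is bounded by the bounded inverse theorem, applied to l2 realised as
  a Banach space.
  The vector sharp_1^-1 dq^alpha is e^alpha.  A vector (x, y) pairs under Omega with every
  (tau q, q) to q^beta iff x = tau y + e^beta, and then U (x, y) lies in H_- iff
  C x + D y = G y + C e^beta vanishes.  Hence
  sharp_2^-1 dq^beta = (tau y + e^beta, y) with y = - G^-1 C e^beta, and
  Delta^{alpha beta} = Omega(e^alpha, sharp_2^-1 dq^beta) = y_alpha.  Finally, composing a nuclear
  operator on the left with a bounded one keeps it nuclear, since bounded operators commute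
  with absolutely convergent series.\<close>

section \<open>The bounded inverse theorem\<close>

lemma surj_imp_ball_in_closure_image_ball:
  fixes f :: "'a::real_normed_vector \<Rightarrow> 'b::banach"
  assumes "surj f"
  shows "\<exists>n y0 e. e > 0 \<and> ball y0 e \<subseteq> closure (f ` ball 0 (real n))"
proof (rule ccontr)
  assume no_ball: "\<not> ?thesis"
  let ?G = "range (\<lambda>n. closure (f ` ball 0 (real n)))"
  have "euclidean interior_of \<Union>?G = {}"
  proof (rule Baire_category_alt)
    show "completely_metrizable_space (euclidean::'b topology) \<or>
        locally_compact_space (euclidean::'b topology) \<and> regular_space euclidean"
      using completely_metrizable_space_euclidean by blast
    fix S assume "S \<in> ?G"
    then obtain n where S: "S = closure (f ` ball 0 (real n))" by auto
    have "interior S = {}"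
    proof (rule ccontr)
      assume "interior S \<noteq> {}"
      then obtain y e where "e > 0" "ball y e \<subseteq> S"
        by (metis all_not_in_conv interior_subset open_contains_ball_eq open_interior subset_trans)
      then show False using no_ball S by blast
    qed
    then show "closedin euclidean S \<and> euclidean interior_of S = {}" using S by simp
  qed simp
  moreover have "\<Union>?G = UNIV"
  proof -
    have "y \<in> \<Union>?G" for y
    proof -
      obtain x where "y = f x" using assms by (metis surj_def)
      moreover obtain n :: nat where "norm x < n" using reals_Archimedean2 by blast
      ultimately have "y \<in> closure (f ` ball 0 (real n))" using closure_subset by fastforce
      then show ?thesis by blast
    qed
    then show ?thesis by blast
  qed
  ultimately show False by simp
qed

lemma approx_preimage_small:
  fixes f :: "'a::real_normed_vector \<Rightarrow> 'b::real_normed_vector"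
  assumes lin: "bounded_linear f" and ball: "ball y0 e \<subseteq> closure (f ` ball 0 r)"
    and "norm z < e" and "d > 0"
  shows "\<exists>a. norm a < 2 * r \<and> norm (f a - z) < d"
proof -
  have "y0 + z \<in> closure (f ` ball 0 r)" "y0 \<in> closure (f ` ball 0 r)"
    using ball assms(3) le_less_trans[OF norm_ge_zero assms(3)] by (auto simp: dist_norm)
  moreover have "d / 2 > 0" using \<open>d > 0\<close> by simp
  ultimately obtain a1 a2 where a1: "a1 \<in> ball 0 r" "dist (f a1) (y0 + z) < d / 2"
    and a2: "a2 \<in> ball 0 r" "dist (f a2) y0 < d / 2"
    unfolding closure_approachable by (metis imageE)
  have "norm (a1 - a2) < 2 * r"
    using a1(1) a2(1) norm_triangle_ineq4[of a1 a2] by simp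
  moreover have "f (a1 - a2) - z = (f a1 - (y0 + z)) - (f a2 - y0)"
    using linear_diff[OF bounded_linear.linear[OF lin]] by (simp add: algebra_simps)
  then have "norm (f (a1 - a2) - z) \<le> norm (f a1 - (y0 + z)) + norm (f a2 - y0)"
    by (metis norm_triangle_ineq4)
  then have "norm (f (a1 - a2) - z) < d" using a1(2) a2(2) by (simp add: dist_norm)
  ultimately show ?thesis by blast
qed

lemma approx_preimage_bound:
  fixes f :: "'a::real_normed_vector \<Rightarrow> 'b::real_normed_vector"
  assumes lin: "bounded_linear f" and ball: "ball y0 e \<subseteq> closure (f ` ball 0 r)" and "e > 0"
    and "d > 0"
  shows "\<exists>x. norm x \<le> (4 * r / e) * norm y \<and> norm (f x - y) < d"
proof (cases "y = 0")
  case True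
  then show ?thesis using \<open>d > 0\<close> linear_0[OF bounded_linear.linear[OF lin]] by auto
next
  case False
  define c where "c = e / (2 * norm y)"
  have c: "c > 0" "norm (c *\<^sub>R y) < e" using False \<open>e > 0\<close> by (simp_all add: c_def)
  then obtain a where a: "norm a < 2 * r" "norm (f a - c *\<^sub>R y) < c * d"
    using approx_preimage_small[OF lin ball] \<open>d > 0\<close> by (meson mult_pos_pos)
  have "f ((1/c) *\<^sub>R a) - y = (1/c) *\<^sub>R (f a - c *\<^sub>R y)"
    using c by (simp add: linear_scale[OF bounded_linear.linear[OF lin]] scaleR_diff_right)
  then have "norm (f ((1/c) *\<^sub>R a) - y) < d"
    using c a(2) by (simp add: divide_less_eq mult.commute)
  moreover have "norm ((1/c) *\<^sub>R a) \<le> (4 * r / e) * norm y"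
    using c a(1) False \<open>e > 0\<close> by (simp add: c_def field_simps)
  ultimately show ?thesis by blast
qed

text \<open>Successive approximation: correcting the residual \<open>y\<^sub>k\<close> halves it at each step, and the
  corrections form a geometrically convergent series.\<close>
lemma exact_preimage_bound:
  fixes f :: "'a::banach \<Rightarrow> 'b::real_normed_vector"
  assumes lin: "bounded_linear f"
    and approx: "\<And>y d. d > 0 \<Longrightarrow> \<exists>x. norm x \<le> M * norm y \<and> norm (f x - y) < d"
  shows "\<exists>x. f x = y \<and> norm x \<le> 2 * M * norm y"
proof (cases "y = 0")
  case True
  then show ?thesis using linear_0[OF bounded_linear.linear[OF lin]] by auto
next
  case False
  then have ny: "norm y > 0" by simp
  have "\<forall>z d. \<exists>x. d > 0 \<longrightarrow> norm x \<le> M * norm z \<and> norm (f x - z) < d"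
    using approx by blast
  then obtain pick where pick: "\<And>z d. d > 0 \<Longrightarrow> norm (pick z d) \<le> M * norm z \<and> norm (f (pick z d) - z) < d"
    by metis
  define Y where "Y = rec_nat y (\<lambda>k yk. yk - f (pick yk (norm y / 2 ^ Suc k)))"
  define X where "X k = pick (Y k) (norm y / 2 ^ Suc k)" for k
  have Y0: "Y 0 = y" and YS: "Y (Suc k) = Y k - f (X k)" for k by (simp_all add: Y_def X_def)
  have nY: "norm (Y k) \<le> norm y / 2 ^ k" for k
  proof (cases k)
    case (Suc j)
    have "norm (Y (Suc j)) = norm (f (X j) - Y j)" by (simp add: YS norm_minus_commute)
    also have "\<dots> < norm y / 2 ^ Suc j" unfolding X_def using pick ny by simp
    finally show ?thesis using Suc by simp
  qed (simp add: Y0)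
  have "M \<ge> 0"
  proof -
    obtain x where x: "norm x \<le> M * norm y" "norm (f x - y) < norm y" using approx ny by blast
    then have "x \<noteq> 0" using linear_0[OF bounded_linear.linear[OF lin]] by auto
    then have "0 < M * norm y" using x(1) by (meson less_le_trans zero_less_norm_iff)
    then show ?thesis using ny by (simp add: zero_less_mult_iff)
  qed
  have nX: "norm (X k) \<le> M * norm y * (1/2) ^ k" for k
  proof -
    have "norm (X k) \<le> M * norm (Y k)" unfolding X_def using pick ny by simp
    also have "\<dots> \<le> M * (norm y / 2 ^ k)" using nY \<open>M \<ge> 0\<close> by (intro mult_left_mono) auto
    finally show ?thesis by (simp add: power_divide)
  qed
  have geom: "summable (\<lambda>k. M * norm y * (1/2::real) ^ k)"
    by (intro summable_mult summable_geometric) simp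
  have sn: "summable (\<lambda>k. norm (X k))"
    by (rule summable_comparison_test'[OF geom]) (use nX in simp)
  have "norm (suminf X) \<le> (\<Sum>k. norm (X k))" using sn by (rule summable_norm)
  also have "\<dots> \<le> (\<Sum>k. M * norm y * (1/2::real) ^ k)" using sn geom nX by (intro suminf_le) auto
  also have "\<dots> = 2 * M * norm y" using suminf_geometric[of "1/2::real"] by (simp add: suminf_mult)
  finally have bound: "norm (suminf X) \<le> 2 * M * norm y" .
  have partial: "(\<Sum>k<N. f (X k)) = y - Y N" for N
    by (induction N) (simp_all add: Y0 YS algebra_simps)
  have "(\<lambda>N. norm y / 2 ^ N) \<longlonglongrightarrow> 0" by (intro LIMSEQ_divide_realpow_zero) auto
  then have "Y \<longlonglongrightarrow> 0" by (rule Lim_null_comparison[rotated]) (simp add: nY)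
  then have "(\<lambda>N. y - Y N) \<longlonglongrightarrow> y - 0" by (intro tendsto_intros)
  then have "(\<lambda>k. f (X k)) sums y" unfolding sums_def partial by simp
  then have "f (suminf X) = y"
    using bounded_linear.suminf[OF lin summable_norm_cancel[OF sn]] sums_unique by metis
  then show ?thesis using bound by blast
qed

theorem bounded_inverse:
  fixes f :: "'a::banach \<Rightarrow> 'b::banach"
  assumes lin: "bounded_linear f" and "surj f"
  shows "\<exists>M. \<forall>y. \<exists>x. f x = y \<and> norm x \<le> M * norm y"
proof -
  obtain n y0 e where "e > 0" and ball: "ball y0 e \<subseteq> closure (f ` ball 0 (real n))"
    using surj_imp_ball_in_closure_image_ball[OF assms(2)] by blast
  then show ?thesis
    using exact_preimage_bound[OF lin approx_preimage_bound[OF lin ball]] by blast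
qed

section \<open>The sequence space \<open>\<ell>\<^sup>2\<close>\<close>

lemma in_l2_iff: "x \<in> l2 \<longleftrightarrow> summable (\<lambda>n. (cmod (x n))^2)"
  by (simp add: l2_def)

lemma l2_add:
  assumes "x \<in> l2" "y \<in> l2"
  shows "(\<lambda>n. x n + y n) \<in> l2"
proof -
  have pointwise: "(cmod (a + b))^2 \<le> 2 * (cmod a)^2 + 2 * (cmod b)^2" for a b :: complex
  proof -
    have "(cmod (a + b))^2 \<le> (cmod a + cmod b)^2" by (intro power_mono norm_triangle_ineq) auto
    then show ?thesis using sum_squares_bound[of "cmod a" "cmod b"] by (simp add: power2_sum)
  qed
  have "summable (\<lambda>n. 2 * (cmod (x n))^2 + 2 * (cmod (y n))^2)"
    using assms unfolding in_l2_iff by (intro summable_add summable_mult)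
  then show ?thesis
    unfolding in_l2_iff by (rule summable_comparison_test') (simp add: pointwise)
qed

lemma l2_scale: "x \<in> l2 \<Longrightarrow> (\<lambda>n. c * x n) \<in> l2"
  unfolding in_l2_iff by (simp add: norm_mult power_mult_distrib summable_mult)

lemma l2_uminus: "x \<in> l2 \<Longrightarrow> (\<lambda>n. - x n) \<in> l2"
  unfolding in_l2_iff by simp

lemma l2_diff: "x \<in> l2 \<Longrightarrow> y \<in> l2 \<Longrightarrow> (\<lambda>n. x n - y n) \<in> l2"
  using l2_add[of x "\<lambda>n. - y n"] l2_uminus[of y] by simp

lemma l2_finite_support: "finite N \<Longrightarrow> (\<And>n. n \<notin> N \<Longrightarrow> x n = 0) \<Longrightarrow> x \<in> l2"
  unfolding in_l2_iff by (rule summable_finite[of N]) auto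

lemma l2_zero: "(\<lambda>_. 0) \<in> l2"
  by (rule l2_finite_support[of "{}"]) auto

lemma l2_basis_vec: "basis_vec b \<in> l2"
  by (rule l2_finite_support[of "{b}"]) (auto simp: basis_vec_def)

lemma l2_cnj: "x \<in> l2 \<Longrightarrow> (\<lambda>n. cnj (x n)) \<in> l2"
  by (simp add: in_l2_iff)

lemma l2_summable_norm_mult:
  assumes "x \<in> l2" "y \<in> l2"
  shows "summable (\<lambda>n. cmod (x n) * cmod (y n))"
proof -
  have pointwise: "cmod a * cmod b \<le> (cmod a)^2 + (cmod b)^2" for a b :: complex
  proof -
    have "2 * (cmod a * cmod b) \<le> (cmod a)^2 + (cmod b)^2"
      using sum_squares_bound[of "cmod a" "cmod b"] by (simp add: mult.assoc)
    moreover have "0 \<le> cmod a * cmod b" by simp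
    ultimately show ?thesis by linarith
  qed
  have "summable (\<lambda>n. (cmod (x n))^2 + (cmod (y n))^2)"
    using assms unfolding in_l2_iff by (rule summable_add)
  then show ?thesis by (rule summable_comparison_test') (simp add: pointwise)
qed

lemma l2_summable_mult: "x \<in> l2 \<Longrightarrow> y \<in> l2 \<Longrightarrow> summable (\<lambda>n. x n * y n)"
  by (rule summable_norm_cancel) (simp add: norm_mult l2_summable_norm_mult)

lemma l2_norm_nonneg: "x \<in> l2 \<Longrightarrow> l2_norm x \<ge> 0"
  unfolding l2_norm_def in_l2_iff by (rule real_sqrt_ge_zero, rule suminf_nonneg) auto

lemma l2_norm_cnj: "l2_norm (\<lambda>n. cnj (x n)) = l2_norm x"
  by (simp add: l2_norm_def)

lemma L2_set_le_l2_norm: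
  assumes "x \<in> l2" "finite I"
  shows "L2_set (\<lambda>n. cmod (x n)) I \<le> l2_norm x"
  unfolding L2_set_def l2_norm_def
  using assms by (intro real_sqrt_le_mono sum_le_suminf) (auto simp: in_l2_iff)

lemma L2_set_lessThan_tendsto_l2_norm:
  assumes "x \<in> l2"
  shows "(\<lambda>N. L2_set (\<lambda>n. cmod (x n)) {..<N}) \<longlonglongrightarrow> l2_norm x"
  using assms unfolding L2_set_def l2_norm_def in_l2_iff by (intro tendsto_real_sqrt summable_LIMSEQ)

lemma l2_norm_le_of_partial_sums:
  assumes "\<And>N. (\<Sum>n<N. (cmod (x n))^2) \<le> c^2" and "c \<ge> 0"
  shows "x \<in> l2" and "l2_norm x \<le> c"
proof -
  have "summable (\<lambda>n. (cmod (x n))^2)" by (rule summableI_nonneg_bounded[OF _ assms(1)]) simp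
  then show "x \<in> l2" and "l2_norm x \<le> c"
    unfolding in_l2_iff l2_norm_def
    using real_sqrt_le_mono[OF suminf_le_const[OF _ assms(1)]] \<open>c \<ge> 0\<close> by auto
qed

lemma coord_le_l2_norm: "x \<in> l2 \<Longrightarrow> cmod (x n) \<le> l2_norm x"
  using L2_set_le_l2_norm[of x "{n}"] by simp

lemma cauchy_schwarz_l2:
  assumes "x \<in> l2" "y \<in> l2"
  shows "(\<Sum>n. cmod (x n) * cmod (y n)) \<le> l2_norm x * l2_norm y"
proof (rule suminf_le_const[OF l2_summable_norm_mult[OF assms]])
  fix N
  have "(\<Sum>n<N. cmod (x n) * cmod (y n))
      \<le> L2_set (\<lambda>n. cmod (x n)) {..<N} * L2_set (\<lambda>n. cmod (y n)) {..<N}"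
    using L2_set_mult_ineq[of "\<lambda>n. cmod (x n)" "\<lambda>n. cmod (y n)"] by simp
  also have "\<dots> \<le> l2_norm x * l2_norm y"
    using assms by (intro mult_mono L2_set_le_l2_norm) (auto simp: l2_norm_nonneg)
  finally show "(\<Sum>n<N. cmod (x n) * cmod (y n)) \<le> l2_norm x * l2_norm y" .
qed

lemma l2_norm_triangle:
  assumes "x \<in> l2" "y \<in> l2"
  shows "l2_norm (\<lambda>n. x n + y n) \<le> l2_norm x + l2_norm y"
proof (rule LIMSEQ_le_const2[OF L2_set_lessThan_tendsto_l2_norm[OF l2_add[OF assms]]],
    intro exI allI impI)
  fix N :: nat
  have "L2_set (\<lambda>n. cmod (x n + y n)) {..<N} \<le> L2_set (\<lambda>n. cmod (x n) + cmod (y n)) {..<N}"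
    by (rule L2_set_mono) (auto intro: norm_triangle_ineq)
  also have "\<dots> \<le> L2_set (\<lambda>n. cmod (x n)) {..<N} + L2_set (\<lambda>n. cmod (y n)) {..<N}"
    by (rule L2_set_triangle_ineq)
  also have "\<dots> \<le> l2_norm x + l2_norm y"
    using assms by (intro add_mono L2_set_le_l2_norm) auto
  finally show "L2_set (\<lambda>n. cmod (x n + y n)) {..<N} \<le> l2_norm x + l2_norm y" .
qed

lemma l2_norm_sq: "x \<in> l2 \<Longrightarrow> (l2_norm x)^2 = (\<Sum>n. (cmod (x n))^2)"
  unfolding l2_norm_def in_l2_iff by (simp add: suminf_nonneg)

lemma l2_norm_scale: "x \<in> l2 \<Longrightarrow> l2_norm (\<lambda>n. c * x n) = cmod c * l2_norm x"
  unfolding l2_norm_def in_l2_iff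
  by (simp add: norm_mult power_mult_distrib suminf_mult real_sqrt_mult)

lemma l2_norm_uminus: "l2_norm (\<lambda>n. - x n) = l2_norm x"
  by (simp add: l2_norm_def)

lemma l2_norm_eq_0_iff: "x \<in> l2 \<Longrightarrow> l2_norm x = 0 \<longleftrightarrow> x = (\<lambda>_. 0)"
  unfolding l2_norm_def in_l2_iff by (simp add: suminf_eq_zero_iff fun_eq_iff)

lemma norm_suminf_mult_le:
  assumes "x \<in> l2" "y \<in> l2"
  shows "cmod (\<Sum>n. x n * y n) \<le> l2_norm x * l2_norm y"
proof -
  have "cmod (\<Sum>n. x n * y n) \<le> (\<Sum>n. cmod (x n * y n))"
    by (rule summable_norm) (simp add: norm_mult l2_summable_norm_mult assms)
  also have "\<dots> \<le> l2_norm x * l2_norm y" using cauchy_schwarz_l2[OF assms] by (simp add: norm_mult)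
  finally show ?thesis .
qed

lemma l2_inner_bound: "v \<in> l2 \<Longrightarrow> x \<in> l2 \<Longrightarrow> cmod (l2_inner v x) \<le> l2_norm v * l2_norm x"
  unfolding l2_inner_def using norm_suminf_mult_le[OF _ l2_cnj, of v x] by (simp add: l2_norm_cnj)

section \<open>\<open>\<ell>\<^sup>2\<close> as a Banach space\<close>

typedef ell2 = l2
  using l2_zero by blast

setup_lifting type_definition_ell2

instantiation ell2 :: real_normed_vector
begin

lift_definition zero_ell2 :: ell2 is "\<lambda>_. 0" by (rule l2_zero)
lift_definition plus_ell2 :: "ell2 \<Rightarrow> ell2 \<Rightarrow> ell2" is "\<lambda>x y n. x n + y n" by (rule l2_add)
lift_definition minus_ell2 :: "ell2 \<Rightarrow> ell2 \<Rightarrow> ell2" is "\<lambda>x y n. x n - y n" by (rule l2_diff)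
lift_definition uminus_ell2 :: "ell2 \<Rightarrow> ell2" is "\<lambda>x n. - x n" by (rule l2_uminus)
lift_definition scaleR_ell2 :: "real \<Rightarrow> ell2 \<Rightarrow> ell2" is "\<lambda>r x n. of_real r * x n" by (rule l2_scale)
lift_definition norm_ell2 :: "ell2 \<Rightarrow> real" is l2_norm .
definition sgn_ell2 :: "ell2 \<Rightarrow> ell2" where "sgn_ell2 x = scaleR (inverse (norm x)) x"
definition dist_ell2 :: "ell2 \<Rightarrow> ell2 \<Rightarrow> real" where "dist_ell2 x y = norm (x - y)"
definition uniformity_ell2 :: "(ell2 \<times> ell2) filter" where
  "uniformity_ell2 = (INF e\<in>{0<..}. principal {(x, y). dist x y < e})"
definition open_ell2 :: "ell2 set \<Rightarrow> bool" where
  "open_ell2 U = (\<forall>x\<in>U. eventually (\<lambda>(x', y). x' = x \<longrightarrow> y \<in> U) uniformity)"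

instance
proof
  fix a b c :: ell2 and r s :: real
  show "a + b + c = a + (b + c)" by transfer (simp add: add.assoc)
  show "a + b = b + a" by transfer (simp add: add.commute)
  show "0 + a = a" by transfer simp
  show "- a + a = 0" by transfer simp
  show "a - b = a + - b" by transfer simp
  show "r *\<^sub>R (a + b) = r *\<^sub>R a + r *\<^sub>R b" by transfer (simp add: distrib_left)
  show "(r + s) *\<^sub>R a = r *\<^sub>R a + s *\<^sub>R a" by transfer (simp add: distrib_right)
  show "r *\<^sub>R s *\<^sub>R a = (r * s) *\<^sub>R a" by transfer (simp add: mult.assoc)
  show "1 *\<^sub>R a = a" by transfer simp
  show "norm a = 0 \<longleftrightarrow> a = 0" by transfer (rule l2_norm_eq_0_iff)
  show "norm (a + b) \<le> norm a + norm b" by transfer (rule l2_norm_triangle)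
  show "norm (r *\<^sub>R a) = \<bar>r\<bar> * norm a" by transfer (simp add: l2_norm_scale)
qed (simp_all add: uniformity_ell2_def open_ell2_def sgn_ell2_def dist_ell2_def)

end

lemmas Rep_ell2_simps [simp] =
  Rep_ell2 zero_ell2.rep_eq plus_ell2.rep_eq minus_ell2.rep_eq scaleR_ell2.rep_eq

lemma bounded_linear_Rep_ell2_coord: "bounded_linear (\<lambda>x. Rep_ell2 x n)"
proof (rule bounded_linear_intro[where K=1])
  fix x :: ell2
  show "norm (Rep_ell2 x n) \<le> norm x * 1"
    using coord_le_l2_norm[OF Rep_ell2] by (simp add: norm_ell2.rep_eq)
qed (simp_all add: scaleR_conv_of_real)

text \<open>The finite partial sums of \<open>|X\<^sub>m - x|\<^sup>2\<close> are limits of those of \<open>|X\<^sub>m - X\<^sub>k|\<^sup>2\<close>.\<close>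
lemma Cauchy_ell2_coordinate_limit:
  fixes X :: "nat \<Rightarrow> ell2"
  assumes "Cauchy X" and coord_lim: "\<And>n. (\<lambda>m. Rep_ell2 (X m) n) \<longlonglongrightarrow> x n" and "e > 0"
  shows "\<exists>M. \<forall>m\<ge>M. (\<lambda>n. Rep_ell2 (X m) n - x n) \<in> l2 \<and> l2_norm (\<lambda>n. Rep_ell2 (X m) n - x n) \<le> e"
proof -
  obtain M where M: "\<And>m k. m \<ge> M \<Longrightarrow> k \<ge> M \<Longrightarrow> norm (X m - X k) < e"
    using CauchyD[OF \<open>Cauchy X\<close> \<open>e > 0\<close>] by blast
  have "(\<Sum>n<N. (cmod (Rep_ell2 (X m) n - x n))^2) \<le> e^2" if "m \<ge> M" for m N
  proof (rule LIMSEQ_le_const2)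
    show "(\<lambda>k. \<Sum>n<N. (cmod (Rep_ell2 (X m - X k) n))^2) \<longlonglongrightarrow> (\<Sum>n<N. (cmod (Rep_ell2 (X m) n - x n))^2)"
      by (simp, intro tendsto_intros coord_lim)
    have "(\<Sum>n<N. (cmod (Rep_ell2 (X m - X k) n))^2) \<le> e^2" if "k \<ge> M" for k
    proof -
      have "(\<Sum>n<N. (cmod (Rep_ell2 (X m - X k) n))^2) \<le> (norm (X m - X k))^2"
        unfolding norm_ell2.rep_eq l2_norm_sq[OF Rep_ell2]
        by (rule sum_le_suminf) (use l2_diff[OF Rep_ell2 Rep_ell2, of "X m" "X k"] in \<open>auto simp: in_l2_iff\<close>)
      also have "\<dots> \<le> e^2" using M[OF \<open>m \<ge> M\<close> that] by (intro power_mono) auto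
      finally show ?thesis .
    qed
    then show "\<exists>K. \<forall>k\<ge>K. (\<Sum>n<N. (cmod (Rep_ell2 (X m - X k) n))^2) \<le> e^2" by blast
  qed
  then show ?thesis using l2_norm_le_of_partial_sums \<open>e > 0\<close> by (meson less_imp_le)
qed

instance ell2 :: banach
proof
  fix X :: "nat \<Rightarrow> ell2" assume "Cauchy X"
  define x where "x n = lim (\<lambda>m. Rep_ell2 (X m) n)" for n
  have "(\<lambda>m. Rep_ell2 (X m) n) \<longlonglongrightarrow> x n" for n
    using bounded_linear.Cauchy[OF bounded_linear_Rep_ell2_coord \<open>Cauchy X\<close>]
    unfolding x_def by (simp add: Cauchy_convergent_iff convergent_LIMSEQ_iff)
  note tail = Cauchy_ell2_coordinate_limit[OF \<open>Cauchy X\<close> this]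
  obtain M1 where "(\<lambda>n. Rep_ell2 (X M1) n - x n) \<in> l2" using tail[of 1] by auto
  then have "(\<lambda>n. Rep_ell2 (X M1) n - (Rep_ell2 (X M1) n - x n)) \<in> l2" by (rule l2_diff[OF Rep_ell2])
  then have "x \<in> l2" by simp
  have "X \<longlonglongrightarrow> Abs_ell2 x"
  proof (rule LIMSEQ_I)
    fix r :: real assume "r > 0"
    then obtain M where M: "\<forall>m\<ge>M. l2_norm (\<lambda>n. Rep_ell2 (X m) n - x n) \<le> r / 2"
      using tail[of "r / 2"] by auto
    show "\<exists>M. \<forall>m\<ge>M. norm (X m - Abs_ell2 x) < r"
    proof (intro exI allI impI)
      fix m assume "m \<ge> M"
      then have "l2_norm (\<lambda>n. Rep_ell2 (X m) n - x n) < r" using M \<open>r > 0\<close> by force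
      then show "norm (X m - Abs_ell2 x) < r"
        using \<open>x \<in> l2\<close> by (simp add: norm_ell2.rep_eq Abs_ell2_inverse)
    qed
  qed
  then show "convergent X" by (rule convergentI)
qed

section \<open>Bounded operators on \<open>\<ell>\<^sup>2\<close>\<close>

lemma bounded_op_l2: "bounded_op L \<Longrightarrow> x \<in> l2 \<Longrightarrow> L x \<in> l2"
  unfolding bounded_op_def by blast

lemma bounded_op_linear: "bounded_op L \<Longrightarrow> x \<in> l2 \<Longrightarrow> y \<in> l2 \<Longrightarrow>
    L (\<lambda>n. a * x n + b * y n) = (\<lambda>n. a * L x n + b * L y n)"
  unfolding bounded_op_def by blast

lemma bounded_op_add: "bounded_op L \<Longrightarrow> x \<in> l2 \<Longrightarrow> y \<in> l2 \<Longrightarrow>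
    L (\<lambda>n. x n + y n) = (\<lambda>n. L x n + L y n)"
  using bounded_op_linear[of L x y 1 1] by simp

lemma bounded_op_scale: "bounded_op L \<Longrightarrow> x \<in> l2 \<Longrightarrow> L (\<lambda>n. c * x n) = (\<lambda>n. c * L x n)"
  using bounded_op_linear[of L x "\<lambda>_. 0" c 0] l2_zero by simp

lemma bounded_op_zero: "bounded_op L \<Longrightarrow> L (\<lambda>_. 0) = (\<lambda>_. 0)"
  using bounded_op_scale[of L "\<lambda>_. 0" 0] l2_zero by simp

lemma bounded_op_uminus_arg: "bounded_op L \<Longrightarrow> x \<in> l2 \<Longrightarrow> L (\<lambda>n. - x n) = (\<lambda>n. - L x n)"
  using bounded_op_scale[of L x "-1"] by simp

lemma bounded_op_diff: "bounded_op L \<Longrightarrow> x \<in> l2 \<Longrightarrow> y \<in> l2 \<Longrightarrow>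
    L (\<lambda>n. x n - y n) = (\<lambda>n. L x n - L y n)"
  using bounded_op_linear[of L x y 1 "-1"] by simp

lemma bounded_op_bound:
  assumes "bounded_op L"
  obtains K where "K \<ge> 0" "\<And>x. x \<in> l2 \<Longrightarrow> l2_norm (L x) \<le> K * l2_norm x"
proof -
  obtain K where K: "\<forall>x\<in>l2. l2_norm (L x) \<le> K * l2_norm x"
    using assms unfolding bounded_op_def by blast
  have "l2_norm (L x) \<le> max K 0 * l2_norm x" if "x \<in> l2" for x
  proof -
    have "l2_norm (L x) \<le> K * l2_norm x" using K that by blast
    also have "\<dots> \<le> max K 0 * l2_norm x" by (rule mult_right_mono) (auto simp: l2_norm_nonneg that)
    finally show ?thesis .
  qed
  then show thesis by (intro that[of "max K 0"]) auto
qed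

lemma bounded_op_uminus: "bounded_op L \<Longrightarrow> bounded_op (\<lambda>x n. - L x n)"
  unfolding bounded_op_def l2_norm_uminus by (auto intro: l2_uminus simp: fun_eq_iff)

lemma bounded_op_CtauD:
  assumes C: "bounded_op C" and D: "bounded_op D" and \<tau>: "bounded_op \<tau>"
  shows "bounded_op (CtauD C D \<tau>)"
proof -
  obtain KC KD K\<tau> where KC: "KC \<ge> 0" "\<And>x. x \<in> l2 \<Longrightarrow> l2_norm (C x) \<le> KC * l2_norm x"
    and KD: "\<And>x. x \<in> l2 \<Longrightarrow> l2_norm (D x) \<le> KD * l2_norm x"
    and K\<tau>: "\<And>x. x \<in> l2 \<Longrightarrow> l2_norm (\<tau> x) \<le> K\<tau> * l2_norm x"
    using bounded_op_bound[OF C] bounded_op_bound[OF D] bounded_op_bound[OF \<tau>] by metis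
  have bound: "l2_norm (CtauD C D \<tau> x) \<le> (KC * K\<tau> + KD) * l2_norm x" if x: "x \<in> l2" for x
  proof -
    have "l2_norm (CtauD C D \<tau> x) \<le> l2_norm (C (\<tau> x)) + l2_norm (D x)"
      unfolding CtauD_def using x by (intro l2_norm_triangle bounded_op_l2[OF C] bounded_op_l2[OF D]
          bounded_op_l2[OF \<tau>])
    also have "\<dots> \<le> KC * (K\<tau> * l2_norm x) + KD * l2_norm x"
      using KC(2)[OF bounded_op_l2[OF \<tau> x]] mult_left_mono[OF K\<tau>[OF x] KC(1)] KD[OF x] by simp
    finally show ?thesis by (simp add: algebra_simps)
  qed
  show ?thesis unfolding bounded_op_def
  proof (intro conjI ballI allI exI)
    fix x assume x: "x \<in> l2"
    show "CtauD C D \<tau> x \<in> l2" unfolding CtauD_def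
      using x by (intro l2_add bounded_op_l2[OF C] bounded_op_l2[OF D] bounded_op_l2[OF \<tau>])
    show "l2_norm (CtauD C D \<tau> x) \<le> (KC * K\<tau> + KD) * l2_norm x" by (rule bound[OF x])
  next
    fix x y a b assume x: "x \<in> l2" and y: "y \<in> l2"
    show "CtauD C D \<tau> (\<lambda>n. a * x n + b * y n) = (\<lambda>n. a * CtauD C D \<tau> x n + b * CtauD C D \<tau> y n)"
      unfolding CtauD_def bounded_op_linear[OF \<tau> x y] bounded_op_linear[OF D x y]
        bounded_op_linear[OF C bounded_op_l2[OF \<tau> x] bounded_op_l2[OF \<tau> y]]
      by (rule ext) (simp add: algebra_simps)
  qed
qed

definition ell2_op :: "op \<Rightarrow> ell2 \<Rightarrow> ell2" where
  "ell2_op L x = Abs_ell2 (L (Rep_ell2 x))"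

lemma Rep_ell2_op: "bounded_op L \<Longrightarrow> Rep_ell2 (ell2_op L x) = L (Rep_ell2 x)"
  unfolding ell2_op_def by (simp add: Abs_ell2_inverse bounded_op_l2)

lemma bounded_linear_ell2_op:
  assumes L: "bounded_op L"
  shows "bounded_linear (ell2_op L)"
proof -
  obtain K where K: "K \<ge> 0" "\<And>x. x \<in> l2 \<Longrightarrow> l2_norm (L x) \<le> K * l2_norm x"
    using bounded_op_bound[OF L] by blast
  show ?thesis
  proof (rule bounded_linear_intro[where K=K])
    fix x y :: ell2 and r :: real
    show "ell2_op L (x + y) = ell2_op L x + ell2_op L y"
      by (rule Rep_ell2_inject[THEN iffD1]) (simp add: Rep_ell2_op[OF L] bounded_op_add[OF L])
    show "ell2_op L (r *\<^sub>R x) = r *\<^sub>R ell2_op L x"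
      by (rule Rep_ell2_inject[THEN iffD1]) (simp add: Rep_ell2_op[OF L] bounded_op_scale[OF L])
    show "norm (ell2_op L x) \<le> norm x * K"
      unfolding norm_ell2.rep_eq Rep_ell2_op[OF L] using K(2)[OF Rep_ell2] by (simp add: mult.commute)
  qed
qed

lemma bounded_op_the_inv_into:
  assumes G: "bounded_op G" and bij: "bij_betw G l2 l2"
  shows "bounded_op (the_inv_into l2 G)"
proof -
  have inj: "inj_on G l2" and img: "G ` l2 = l2" using bij by (auto simp: bij_betw_def)
  let ?Gi = "the_inv_into l2 G"
  have Gi_l2: "?Gi p \<in> l2" and G_Gi: "G (?Gi p) = p" if "p \<in> l2" for p
    using the_inv_into_into[OF inj] f_the_inv_into_f[OF inj] that img by auto
  have "surj (ell2_op G)"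
  proof (rule surjI)
    fix p
    show "ell2_op G (Abs_ell2 (?Gi (Rep_ell2 p))) = p"
      unfolding ell2_op_def using Gi_l2 G_Gi by (simp add: Abs_ell2_inverse Rep_ell2_inverse)
  qed
  then obtain M where M: "\<And>y. \<exists>x. ell2_op G x = y \<and> norm x \<le> M * norm y"
    using bounded_inverse[OF bounded_linear_ell2_op[OF G]] by blast
  have "l2_norm (?Gi p) \<le> M * l2_norm p" if p: "p \<in> l2" for p
  proof -
    obtain x where x: "ell2_op G x = Abs_ell2 p" "norm x \<le> M * norm (Abs_ell2 p)" using M by blast
    have "G (Rep_ell2 x) = p" using arg_cong[OF x(1), of Rep_ell2] p
      by (simp add: Rep_ell2_op[OF G] Abs_ell2_inverse)
    then have "?Gi p = Rep_ell2 x" by (intro the_inv_into_f_eq[OF inj]) (auto simp: Rep_ell2)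
    then show ?thesis using x(2) p by (simp add: norm_ell2.rep_eq Abs_ell2_inverse)
  qed
  moreover have "?Gi (\<lambda>n. a * x n + b * y n) = (\<lambda>n. a * ?Gi x n + b * ?Gi y n)"
    if "x \<in> l2" "y \<in> l2" for x y a b
    using that by (intro the_inv_into_f_eq[OF inj])
      (simp_all add: bounded_op_linear[OF G Gi_l2 Gi_l2] G_Gi l2_add l2_scale Gi_l2)
  ultimately show ?thesis using Gi_l2 unfolding bounded_op_def by blast
qed

lemma bounded_op_suminf:
  assumes L: "bounded_op L" and w: "\<And>n. w n \<in> l2" and sum: "summable (\<lambda>n. l2_norm (w n))"
  shows "L (\<lambda>\<alpha>. \<Sum>n. w n \<alpha>) = (\<lambda>\<alpha>. \<Sum>n. L (w n) \<alpha>)"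
proof -
  define W where "W n = Abs_ell2 (w n)" for n
  have Rep_W: "Rep_ell2 (W n) = w n" for n unfolding W_def using w by (simp add: Abs_ell2_inverse)
  have "summable (\<lambda>n. norm (W n))" using sum by (simp add: norm_ell2.rep_eq Rep_W)
  then have W: "summable W" by (rule summable_norm_cancel)
  have coord: "Rep_ell2 (suminf V) \<alpha> = (\<Sum>n. Rep_ell2 (V n) \<alpha>)" if "summable V" for V \<alpha>
    by (rule bounded_linear.suminf[OF bounded_linear_Rep_ell2_coord that])
  have "(\<lambda>\<alpha>. \<Sum>n. w n \<alpha>) = Rep_ell2 (suminf W)"
    using coord[OF W] by (simp add: Rep_W fun_eq_iff)
  then have "L (\<lambda>\<alpha>. \<Sum>n. w n \<alpha>) = Rep_ell2 (ell2_op L (suminf W))"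
    by (simp add: Rep_ell2_op[OF L])
  also have "\<dots> = Rep_ell2 (\<Sum>n. ell2_op L (W n))"
    by (simp add: bounded_linear.suminf[OF bounded_linear_ell2_op[OF L] W])
  also have "\<dots> = (\<lambda>\<alpha>. \<Sum>n. L (w n) \<alpha>)"
    using coord[OF bounded_linear.summable[OF bounded_linear_ell2_op[OF L] W]]
    by (simp add: Rep_ell2_op[OF L] Rep_W fun_eq_iff)
  finally show ?thesis .
qed

lemma trace_class_bounded_op_comp:
  assumes L: "bounded_op L" and "trace_class C"
  shows "trace_class (\<lambda>v. L (C v))"
proof -
  obtain x y where xy: "\<And>n. x n \<in> l2" "\<And>n. y n \<in> l2"
    and sum: "summable (\<lambda>n. l2_norm (x n) * l2_norm (y n))"
    and C: "\<And>v. v \<in> l2 \<Longrightarrow> C v = (\<lambda>\<alpha>. \<Sum>n. l2_inner v (x n) * y n \<alpha>)"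
    using assms(2) unfolding trace_class_def by blast
  obtain K where K: "K \<ge> 0" "\<And>p. p \<in> l2 \<Longrightarrow> l2_norm (L p) \<le> K * l2_norm p"
    using bounded_op_bound[OF L] by blast
  have "summable (\<lambda>n. l2_norm (x n) * l2_norm (L (y n)))"
  proof (rule summable_comparison_test'[OF summable_mult[OF sum, of K]])
    fix n
    show "norm (l2_norm (x n) * l2_norm (L (y n))) \<le> K * (l2_norm (x n) * l2_norm (y n))"
      using mult_left_mono[OF K(2)[OF xy(2)] l2_norm_nonneg[OF xy(1)], of n]
        l2_norm_nonneg[OF xy(1)] l2_norm_nonneg[OF bounded_op_l2[OF L xy(2)]]
      by (simp add: algebra_simps)
  qed
  moreover have "L (C v) = (\<lambda>\<alpha>. \<Sum>n. l2_inner v (x n) * L (y n) \<alpha>)" if v: "v \<in> l2" for v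
  proof -
    have "l2_norm (\<lambda>\<alpha>. l2_inner v (x n) * y n \<alpha>) \<le> l2_norm v * (l2_norm (x n) * l2_norm (y n))"
      for n
      using mult_right_mono[OF l2_inner_bound[OF v xy(1)] l2_norm_nonneg[OF xy(2)], of n]
      by (simp add: l2_norm_scale xy mult.assoc)
    then have "summable (\<lambda>n. l2_norm (\<lambda>\<alpha>. l2_inner v (x n) * y n \<alpha>))"
      by (intro summable_comparison_test'[OF summable_mult[OF sum]]) (simp add: l2_norm_nonneg l2_scale xy)
    then show ?thesis
      unfolding C[OF v] using xy by (simp add: bounded_op_suminf[OF L] l2_scale bounded_op_scale[OF L])
  qed
  ultimately show ?thesis unfolding trace_class_def
    using xy bounded_op_l2[OF L] by (intro exI[of _ x] exI[of _ "\<lambda>n. L (y n)"]) simp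
qed

section \<open>The bilinear pairing and symmetric operators\<close>

definition pairing :: "seq \<Rightarrow> seq \<Rightarrow> complex" where
  "pairing x y = (\<Sum>n. x n * y n)"

lemma omega_eq_pairing: "omega v w = pairing (fst v) (snd w) - pairing (snd v) (fst w)"
  by (simp add: omega_def pairing_def)

lemma pairing_commute: "pairing x y = pairing y x"
  unfolding pairing_def by (simp add: mult.commute)

lemma pairing_add_right:
  "x \<in> l2 \<Longrightarrow> y \<in> l2 \<Longrightarrow> z \<in> l2 \<Longrightarrow> pairing x (\<lambda>n. y n + z n) = pairing x y + pairing x z"
  unfolding pairing_def by (simp add: distrib_left suminf_add[symmetric] l2_summable_mult)

lemma pairing_add_left:
  "x \<in> l2 \<Longrightarrow> y \<in> l2 \<Longrightarrow> z \<in> l2 \<Longrightarrow> pairing (\<lambda>n. x n + y n) z = pairing x z + pairing y z"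
  using pairing_add_right[of z x y] by (simp add: pairing_commute)

lemma pairing_diff_right:
  "x \<in> l2 \<Longrightarrow> y \<in> l2 \<Longrightarrow> z \<in> l2 \<Longrightarrow> pairing x (\<lambda>n. y n - z n) = pairing x y - pairing x z"
  unfolding pairing_def by (simp add: right_diff_distrib suminf_diff[symmetric] l2_summable_mult)

lemma pairing_scale_right: "x \<in> l2 \<Longrightarrow> y \<in> l2 \<Longrightarrow> pairing x (\<lambda>n. c * y n) = c * pairing x y"
  unfolding pairing_def using suminf_mult[OF l2_summable_mult, of x y c] by (simp add: ac_simps)

lemma pairing_basis_vec_left: "pairing (basis_vec b) q = q b"
  unfolding pairing_def by (subst suminf_finite[of "{b}"]) (auto simp: basis_vec_def)

lemma pairing_basis_vec_right: "pairing q (basis_vec b) = q b"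
  using pairing_basis_vec_left by (simp add: pairing_commute)

lemma pairing_zero_left: "pairing (\<lambda>_. 0) q = 0"
  unfolding pairing_def by simp

lemma basis_vec_commute: "basis_vec a b = basis_vec b a"
  by (simp add: basis_vec_def eq_commute)

definition trunc_seq :: "nat \<Rightarrow> seq \<Rightarrow> seq" where
  "trunc_seq N y = (\<lambda>n. if n < N then y n else 0)"

lemma l2_trunc_seq: "trunc_seq N y \<in> l2"
  unfolding trunc_seq_def by (rule l2_finite_support[of "{..<N}"]) auto

lemma trunc_seq_Suc: "trunc_seq (Suc N) y = (\<lambda>n. 1 * trunc_seq N y n + y N * basis_vec N n)"
  unfolding trunc_seq_def basis_vec_def by (auto simp: fun_eq_iff less_Suc_eq)

lemma l2_norm_tail_tendsto_0:
  assumes "y \<in> l2"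
  shows "(\<lambda>N. l2_norm (\<lambda>n. y n - trunc_seq N y n)) \<longlonglongrightarrow> 0"
proof -
  define f where "f n = (cmod (y n))^2" for n
  have f: "summable f" unfolding f_def using assms by (simp add: in_l2_iff)
  have "(\<Sum>n. (cmod (y n - trunc_seq N y n))^2) = suminf f - (\<Sum>n<N. f n)" for N
  proof -
    have "(\<lambda>n. (cmod (y n - trunc_seq N y n))^2) = (\<lambda>n. f n - (if n < N then f n else 0))"
      by (auto simp: fun_eq_iff trunc_seq_def f_def)
    moreover have g: "summable (\<lambda>n. if n < N then f n else 0)"
      by (rule summable_finite[of "{..<N}"]) auto
    moreover have "(\<Sum>n. if n < N then f n else 0) = (\<Sum>n<N. f n)"
      by (subst suminf_finite[of "{..<N}"]) auto
    ultimately show ?thesis using suminf_diff[OF f g] by simp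
  qed
  moreover have "(\<lambda>N. sqrt (suminf f - (\<Sum>n<N. f n))) \<longlonglongrightarrow> sqrt (suminf f - suminf f)"
    by (intro tendsto_intros summable_LIMSEQ f)
  ultimately show ?thesis unfolding l2_norm_def by simp
qed

lemma pairing_bounded_op_expansion:
  assumes L: "bounded_op L" and y: "y \<in> l2" and q: "q \<in> l2"
  shows "(\<lambda>N. \<Sum>b<N. q b * pairing y (L (basis_vec b))) \<longlonglongrightarrow> pairing y (L q)"
proof -
  obtain K where K: "K \<ge> 0" "\<And>x. x \<in> l2 \<Longrightarrow> l2_norm (L x) \<le> K * l2_norm x"
    using bounded_op_bound[OF L] by blast
  have partial: "pairing y (L (trunc_seq N q)) = (\<Sum>b<N. q b * pairing y (L (basis_vec b)))" for N
  proof (induction N)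
    case 0
    have "trunc_seq 0 q = (\<lambda>_. 0)" by (simp add: trunc_seq_def)
    then show ?case by (simp add: bounded_op_zero[OF L] pairing_def)
  next
    case (Suc N)
    have "L (trunc_seq (Suc N) q) = (\<lambda>n. L (trunc_seq N q) n + q N * L (basis_vec N) n)"
      unfolding trunc_seq_Suc bounded_op_linear[OF L l2_trunc_seq l2_basis_vec] by simp
    then have "pairing y (L (trunc_seq (Suc N) q))
        = pairing y (L (trunc_seq N q)) + q N * pairing y (L (basis_vec N))"
      using y bounded_op_l2[OF L l2_trunc_seq] bounded_op_l2[OF L l2_basis_vec]
      by (simp add: pairing_add_right pairing_scale_right l2_scale)
    then show ?case using Suc by simp
  qed
  have bound: "cmod (pairing y (L q) - pairing y (L (trunc_seq N q)))
      \<le> l2_norm y * (K * l2_norm (\<lambda>n. q n - trunc_seq N q n))" for N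
  proof -
    have tail: "(\<lambda>n. q n - trunc_seq N q n) \<in> l2" by (rule l2_diff[OF q l2_trunc_seq])
    have "pairing y (L q) - pairing y (L (trunc_seq N q)) = pairing y (L (\<lambda>n. q n - trunc_seq N q n))"
      unfolding bounded_op_diff[OF L q l2_trunc_seq]
      by (rule pairing_diff_right[OF y bounded_op_l2[OF L q] bounded_op_l2[OF L l2_trunc_seq], symmetric])
    also have "cmod \<dots> \<le> l2_norm y * l2_norm (L (\<lambda>n. q n - trunc_seq N q n))"
      unfolding pairing_def by (rule norm_suminf_mult_le[OF y bounded_op_l2[OF L tail]])
    also have "\<dots> \<le> l2_norm y * (K * l2_norm (\<lambda>n. q n - trunc_seq N q n))"
      using K(2)[OF tail] l2_norm_nonneg[OF y] by (rule mult_left_mono)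
    finally show ?thesis .
  qed
  have "(\<lambda>N. l2_norm y * (K * l2_norm (\<lambda>n. q n - trunc_seq N q n))) \<longlonglongrightarrow> 0"
    by (intro tendsto_mult_right_zero l2_norm_tail_tendsto_0 q)
  then have error: "(\<lambda>N. pairing y (L q) - pairing y (L (trunc_seq N q))) \<longlonglongrightarrow> 0"
    by (rule Lim_null_comparison[OF always_eventually[OF allI[OF bound]]])
  have "(\<lambda>N. pairing y (L (trunc_seq N q))) \<longlonglongrightarrow> pairing y (L q)"
    using tendsto_diff[OF tendsto_const[of "pairing y (L q)"] error] by simp
  then show ?thesis by (simp only: partial)
qed

lemma pairing_symmetric_op:
  assumes L: "bounded_op L" and sym: "\<forall>\<alpha> \<beta>. coeff L \<alpha> \<beta> = coeff L \<beta> \<alpha>"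
    and y: "y \<in> l2" and q: "q \<in> l2"
  shows "pairing y (L q) = pairing q (L y)"
proof -
  have "pairing y (L (basis_vec b)) = L y b" for b
  proof (rule LIMSEQ_unique)
    show "(\<lambda>N. \<Sum>a<N. y a * L (basis_vec b) a) \<longlonglongrightarrow> pairing y (L (basis_vec b))"
      unfolding pairing_def
      by (rule summable_LIMSEQ, rule l2_summable_mult[OF y bounded_op_l2[OF L l2_basis_vec]])
    show "(\<lambda>N. \<Sum>a<N. y a * L (basis_vec b) a) \<longlonglongrightarrow> L y b"
      using pairing_bounded_op_expansion[OF L l2_basis_vec y, of b] sym
      by (simp add: pairing_basis_vec_left coeff_def)
  qed
  then have "(\<lambda>N. \<Sum>b<N. q b * L y b) \<longlonglongrightarrow> pairing y (L q)"
    using pairing_bounded_op_expansion[OF L y q] by simp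
  moreover have "(\<lambda>N. \<Sum>b<N. q b * L y b) \<longlonglongrightarrow> pairing q (L y)"
    unfolding pairing_def by (rule summable_LIMSEQ, rule l2_summable_mult[OF q bounded_op_l2[OF L y]])
  ultimately show ?thesis by (rule LIMSEQ_unique)
qed

section \<open>The propagator\<close>

lemma blockop_lagr: "blockop A B C D (\<tau> q, q) = (\<lambda>n. A (\<tau> q) n + B q n, CtauD C D \<tau> q)"
  by (simp add: blockop_def CtauD_def)

lemma inj_on_CtauD:
  assumes A: "bounded_op A" and B: "bounded_op B" and C: "bounded_op C" and D: "bounded_op D"
    and \<tau>: "bounded_op \<tau>" and U: "symplectic_aut (blockop A B C D)"
    and sum: "direct_sum_H (blockop A B C D ` lagr_T \<tau>) Hminus"
  shows "inj_on (CtauD C D \<tau>) l2"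
proof (rule inj_onI)
  let ?U = "blockop A B C D" and ?G = "CtauD C D \<tau>"
  fix q1 q2 assume q1: "q1 \<in> l2" and q2: "q2 \<in> l2" and eq: "?G q1 = ?G q2"
  define q where "q = (\<lambda>n. q1 n - q2 n)"
  have q: "q \<in> l2" unfolding q_def by (rule l2_diff[OF q1 q2])
  have "?G q = (\<lambda>_. 0)"
    unfolding q_def bounded_op_diff[OF bounded_op_CtauD[OF C D \<tau>] q1 q2] eq by simp
  then have "?U (\<tau> q, q) \<in> Hminus"
    unfolding Hminus_def blockop_lagr using q by (simp add: l2_add bounded_op_l2 A B \<tau>)
  moreover have "?U (\<tau> q, q) \<in> ?U ` lagr_T \<tau>" using q by (auto simp: lagr_T_def)
  ultimately have "?U (\<tau> q, q) = ?U hzero"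
    using sum by (auto simp: direct_sum_H_def hzero_def blockop_def bounded_op_zero A B C D)
  moreover have "(\<tau> q, q) \<in> HH" "hzero \<in> HH"
    using q bounded_op_l2[OF \<tau> q] l2_zero by (auto simp: HH_def hzero_def)
  ultimately have "(\<tau> q, q) = hzero"
    using U unfolding symplectic_aut_def bij_betw_def by (meson inj_onD)
  then show "q1 = q2" by (simp add: hzero_def q_def fun_eq_iff)
qed

lemma CtauD_image:
  assumes C: "bounded_op C" and D: "bounded_op D" and \<tau>: "bounded_op \<tau>"
    and sum: "direct_sum_H (blockop A B C D ` lagr_T \<tau>) Hminus"
  shows "CtauD C D \<tau> ` l2 = l2"
proof
  show "CtauD C D \<tau> ` l2 \<subseteq> l2" using bounded_op_l2[OF bounded_op_CtauD[OF C D \<tau>]] by blast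
  show "l2 \<subseteq> CtauD C D \<tau> ` l2"
  proof
    fix p assume p: "p \<in> l2"
    then have "(\<lambda>_. 0, p) \<in> HH" using l2_zero by (simp add: HH_def)
    then obtain q h where q: "q \<in> l2" and h: "h \<in> Hminus"
      and decomp: "(\<lambda>_. 0, p) = vadd (blockop A B C D (\<tau> q, q)) h"
      using sum unfolding direct_sum_H_def lagr_T_def by blast
    then have "p = CtauD C D \<tau> q"
      by (simp add: vadd_def blockop_lagr Hminus_def)
    then show "p \<in> CtauD C D \<tau> ` l2" using q by blast
  qed
qed

text \<open>This is where the symmetry of \<open>\<tau>\<close>, i.e. that \<open>T\<close> is Lagrangian, enters.\<close>
lemma omega_eq_dq_on_lagr_T_iff:
  assumes \<tau>: "bounded_op \<tau>" and sym: "\<forall>\<alpha> \<beta>. coeff \<tau> \<alpha> \<beta> = coeff \<tau> \<beta> \<alpha>"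
    and x: "x \<in> l2" and y: "y \<in> l2"
  shows "(\<forall>t\<in>lagr_T \<tau>. omega (x, y) t = dq \<beta> t) \<longleftrightarrow> x = (\<lambda>n. \<tau> y n + basis_vec \<beta> n)"
proof -
  have omega_T: "omega (x, y) (\<tau> q, q) = pairing x q - pairing q (\<tau> y)" if "q \<in> l2" for q
    by (simp add: omega_eq_pairing pairing_symmetric_op[OF \<tau> sym y that])
  show ?thesis
  proof
    assume "\<forall>t\<in>lagr_T \<tau>. omega (x, y) t = dq \<beta> t"
    then have "omega (x, y) (\<tau> (basis_vec n), basis_vec n) = basis_vec n \<beta>" for n
      using l2_basis_vec by (auto simp: lagr_T_def dq_def)
    moreover have "omega (x, y) (\<tau> (basis_vec n), basis_vec n) = x n - \<tau> y n" for n
      using omega_T[OF l2_basis_vec] by (simp only: pairing_basis_vec_left pairing_basis_vec_right)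
    ultimately have "x n - \<tau> y n = basis_vec \<beta> n" for n by (metis basis_vec_commute)
    then show "x = (\<lambda>n. \<tau> y n + basis_vec \<beta> n)" by (simp add: fun_eq_iff algebra_simps)
  next
    assume x_eq: "x = (\<lambda>n. \<tau> y n + basis_vec \<beta> n)"
    show "\<forall>t\<in>lagr_T \<tau>. omega (x, y) t = dq \<beta> t"
    proof (clarsimp simp: lagr_T_def)
      fix q assume q: "q \<in> l2"
      show "omega (x, y) (\<tau> q, q) = dq \<beta> (\<tau> q, q)"
        using omega_T[OF q] unfolding x_eq pairing_add_left[OF bounded_op_l2[OF \<tau> y] l2_basis_vec q]
        by (simp add: pairing_commute pairing_basis_vec_left pairing_basis_vec_right dq_def)
    qed
  qed
qed

lemma sharp1_inv_dq:
  assumes \<tau>: "bounded_op \<tau>" and sym: "\<forall>\<alpha> \<beta>. coeff \<tau> \<alpha> \<beta> = coeff \<tau> \<beta> \<alpha>"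
  shows "sharp1_inv \<tau> (dq \<alpha>) = (basis_vec \<alpha>, \<lambda>_. 0)"
proof -
  have iff: "(\<forall>t\<in>lagr_T \<tau>. omega (x, \<lambda>_. 0) t = dq \<alpha> t) \<longleftrightarrow> x = basis_vec \<alpha>" if "x \<in> l2" for x
    using omega_eq_dq_on_lagr_T_iff[OF \<tau> sym that l2_zero] by (simp add: bounded_op_zero[OF \<tau>])
  show ?thesis
    unfolding sharp1_inv_def
  proof (rule the_equality)
    show "(basis_vec \<alpha>, \<lambda>_. 0) \<in> Hminus \<and> (\<forall>t\<in>lagr_T \<tau>. omega (basis_vec \<alpha>, \<lambda>_. 0) t = dq \<alpha> t)"
      using iff[OF l2_basis_vec] by (simp add: Hminus_def l2_basis_vec)
  next
    fix v assume "v \<in> Hminus \<and> (\<forall>t\<in>lagr_T \<tau>. omega v t = dq \<alpha> t)"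
    then show "v = (basis_vec \<alpha>, \<lambda>_. 0)"
      using iff[of "fst v"] by (cases v) (simp add: Hminus_def)
  qed
qed

lemma blockop_in_Hminus_iff:
  assumes A: "bounded_op A" and B: "bounded_op B" and C: "bounded_op C" and \<tau>: "bounded_op \<tau>"
    and z: "z \<in> l2"
  shows "blockop A B C D (\<lambda>n. \<tau> z n + basis_vec \<beta> n, z) \<in> Hminus
      \<longleftrightarrow> CtauD C D \<tau> z = (\<lambda>n. - C (basis_vec \<beta>) n)"
proof -
  let ?v = "blockop A B C D (\<lambda>n. \<tau> z n + basis_vec \<beta> n, z)"
  have "snd ?v = (\<lambda>n. CtauD C D \<tau> z n + C (basis_vec \<beta>) n)"
    unfolding blockop_def CtauD_def snd_conv fst_conv
      bounded_op_add[OF C bounded_op_l2[OF \<tau> z] l2_basis_vec]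
    by (simp add: fun_eq_iff add_ac)
  moreover have "fst ?v \<in> l2"
    using z by (simp add: blockop_def l2_add bounded_op_l2 A B \<tau> l2_basis_vec)
  ultimately show ?thesis
    by (simp add: Hminus_def fun_eq_iff eq_neg_iff_add_eq_0 del: fst_conv snd_conv)
qed

lemma sharp2_inv_dq:
  fixes A B C D \<tau> :: op and \<beta> :: nat
  defines "G \<equiv> CtauD C D \<tau>"
  defines "y \<equiv> \<lambda>n. - the_inv_into l2 G (C (basis_vec \<beta>)) n"
  assumes A: "bounded_op A" and B: "bounded_op B" and C: "bounded_op C" and D: "bounded_op D"
    and \<tau>: "bounded_op \<tau>" and sym: "\<forall>\<alpha> \<beta>. coeff \<tau> \<alpha> \<beta> = coeff \<tau> \<beta> \<alpha>"
    and bij: "bij_betw G l2 l2"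
  shows "sharp2_inv (blockop A B C D) \<tau> (dq \<beta>) = (\<lambda>n. \<tau> y n + basis_vec \<beta> n, y)"
proof -
  let ?U = "blockop A B C D" and ?c = "C (basis_vec \<beta>)"
  have G: "bounded_op G" unfolding G_def by (rule bounded_op_CtauD[OF C D \<tau>])
  have inj: "inj_on G l2" and img: "G ` l2 = l2" using bij by (auto simp: bij_betw_def)
  have c: "?c \<in> l2" by (rule bounded_op_l2[OF C l2_basis_vec])
  have Hminus_iff: "?U (\<lambda>n. \<tau> z n + basis_vec \<beta> n, z) \<in> Hminus \<longleftrightarrow> G z = (\<lambda>n. - ?c n)"
    if "z \<in> l2" for z
    unfolding G_def by (rule blockop_in_Hminus_iff[OF A B C \<tau> that])
  have y: "y \<in> l2"
    unfolding y_def using the_inv_into_into[OF inj] c img by (simp add: l2_uminus)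
  have Gy: "G y = (\<lambda>n. - ?c n)"
    unfolding y_def using the_inv_into_into[OF inj] f_the_inv_into_f[OF inj] c img
    by (simp add: bounded_op_uminus_arg[OF G])
  show ?thesis
    unfolding sharp2_inv_def
  proof (rule the_equality)
    show "(\<lambda>n. \<tau> y n + basis_vec \<beta> n, y) \<in> HH \<and> ?U (\<lambda>n. \<tau> y n + basis_vec \<beta> n, y) \<in> Hminus \<and>
        (\<forall>t\<in>lagr_T \<tau>. omega (\<lambda>n. \<tau> y n + basis_vec \<beta> n, y) t = dq \<beta> t)"
      using y Hminus_iff[OF y] Gy omega_eq_dq_on_lagr_T_iff[OF \<tau> sym _ y]
      by (simp add: HH_def l2_add bounded_op_l2[OF \<tau>] l2_basis_vec)
  next
    fix v assume v: "v \<in> HH \<and> ?U v \<in> Hminus \<and> (\<forall>t\<in>lagr_T \<tau>. omega v t = dq \<beta> t)"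
    obtain x' y' where v_eq: "v = (x', y')" by (cases v)
    have x': "x' \<in> l2" and y': "y' \<in> l2" using v by (auto simp: v_eq HH_def)
    have x'_eq: "x' = (\<lambda>n. \<tau> y' n + basis_vec \<beta> n)"
      using v omega_eq_dq_on_lagr_T_iff[OF \<tau> sym x' y'] by (simp add: v_eq)
    then have "G y' = G y" using v Hminus_iff[OF y'] Gy by (simp add: v_eq)
    then have "y' = y" using inj y y' by (meson inj_onD)
    then show "v = (\<lambda>n. \<tau> y n + basis_vec \<beta> n, y)" by (simp add: v_eq x'_eq)
  qed
qed

theorem lemma5:
  fixes A B C D \<tau> :: op
  assumes "bounded_op A" and "bounded_op B" and "bounded_op C" and "bounded_op D"
    and "symplectic_aut (blockop A B C D)"
    and "bounded_op \<tau>"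
    and "\<forall>\<alpha> \<beta>. coeff \<tau> \<alpha> \<beta> = coeff \<tau> \<beta> \<alpha>"
    and "direct_sum_H (blockop A B C D ` lagr_T \<tau>) Hminus"
  shows "bounded_op (CtauD C D \<tau>) \<and> bij_betw (CtauD C D \<tau>) l2 l2
      \<and> bounded_op (the_inv_into l2 (CtauD C D \<tau>))
      \<and> (\<forall>\<alpha> \<beta>. propagator (blockop A B C D) \<tau> \<alpha> \<beta>
                = - coeff (\<lambda>x. the_inv_into l2 (CtauD C D \<tau>) (C x)) \<alpha> \<beta>)
      \<and> (trace_class C \<longrightarrow>
           (\<exists>L. trace_class L \<and> (\<forall>\<alpha> \<beta>. propagator (blockop A B C D) \<tau> \<alpha> \<beta> = coeff L \<alpha> \<beta>)))"
proof -
  let ?G = "CtauD C D \<tau>"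
  let ?Gi = "the_inv_into l2 ?G"
  have G: "bounded_op ?G" using bounded_op_CtauD assms by blast
  have bij: "bij_betw ?G l2 l2"
    unfolding bij_betw_def using inj_on_CtauD CtauD_image assms by blast
  have Gi: "bounded_op ?Gi" by (rule bounded_op_the_inv_into[OF G bij])
  have propagator: "propagator (blockop A B C D) \<tau> \<alpha> \<beta> = - ?Gi (C (basis_vec \<beta>)) \<alpha>" for \<alpha> \<beta>
    unfolding propagator_def sharp1_inv_dq[OF assms(6,7)] sharp2_inv_dq[OF assms(1-4,6,7) bij]
    by (simp add: omega_eq_pairing pairing_basis_vec_left pairing_zero_left)
  have "trace_class (\<lambda>v. (\<lambda>p n. - ?Gi p n) (C v))" if "trace_class C"
    by (rule trace_class_bounded_op_comp[OF bounded_op_uminus[OF Gi] that])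
  then show ?thesis using G bij Gi propagator by (auto simp: coeff_def)
qed

end
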